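(* Let $q$ be a prime power and let $\mathrm{Aff}(\mathbb{F}_q)$ be the affine group. Let $A\subseteq \mathrm{Aff}(\mathbb{F}_q)$ be a set and let $\Gamma\subseteq \mathrm{Aff}(\mathbb{F}_q)$ be a subgroup such that for every non-trivial multiplicative character $\chi$ of $\mathbb{F}_q^*$ there is $\gamma=(a,b)\in\Gamma$ with $\chi(a)\neq 1$. Let $z\in \mathrm{Aff}(\mathbb{F}_q)$ be arbitrary and let $n\ge 1$ be an integer such that $|A|^n|\Gamma|^2 > q^{n+2}(q-1)^2$. Then $A^n\cap z\Gamma\neq\emptyset$ and $A^n\cap \Gamma z\neq\emptyset$.
   Context: $\mathrm{Aff}(\mathbb{F}_q)$ is the group of matrices $\begin{pmatrix} a & b\\ 0 & 1\end{pmatrix}$ with $a\in\mathbb{F}_q^*=\mathbb{F}_q\setminus\{0\}$, $b\in\mathbb{F}_q$, under matrix multiplication; such an element is written $(a,b)$. For a set $A$ in a group, $A^n=\{a_1\cdots a_n : a_i\in A\}$, and $z\Gamma=\{z\gamma:\gamma\in\Gamma\}$, $\Gamma z=\{\gamma z:\gamma\in\Gamma\}$. *)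

theory Defs
  imports "HOL-Algebra.Coset" Complex_Main
begin

text \<open>The affine group Aff(F_q): the pair (a,b) stands for the matrix [[a,b],[0,1]],
  so (a,b)(c,d) = (a c, a d + b).\<close>

definition aff_mult :: "'a::field \<times> 'a \<Rightarrow> 'a \<times> 'a \<Rightarrow> 'a \<times> 'a" where
  "aff_mult x y = (fst x * fst y, fst x * snd y + snd x)"

definition Aff :: "('a::field \<times> 'a) monoid" where
  "Aff = \<lparr>carrier = {x. fst x \<noteq> 0}, mult = aff_mult, one = (1, 0)\<rparr>"

text \<open>A multiplicative character of F^*: a homomorphism F^* -> C^* (values at 0 irrelevant).\<close>

definition mult_char :: "('a::field \<Rightarrow> complex) \<Rightarrow> bool" where
  "mult_char \<chi> \<longleftrightarrow> (\<forall>x y. x \<noteq> 0 \<longrightarrow> y \<noteq> 0 \<longrightarrow> \<chi> (x * y) = \<chi> x * \<chi> y)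
                  \<and> (\<forall>x. x \<noteq> 0 \<longrightarrow> \<chi> x \<noteq> 0)"

definition nontrivial_char :: "('a::field \<Rightarrow> complex) \<Rightarrow> bool" where
  "nontrivial_char \<chi> \<longleftrightarrow> (\<exists>x. x \<noteq> 0 \<and> \<chi> x \<noteq> 1)"

fun aff_setpow :: "('a::field \<times> 'a) set \<Rightarrow> nat \<Rightarrow> ('a \<times> 'a) set" where
  "aff_setpow A 0 = {(1, 0)}"
| "aff_setpow A (Suc n) = {aff_mult x a | x a. x \<in> aff_setpow A n \<and> a \<in> A}"

end

(*
  The character hypothesis forces the slope map fst : Gamma -> F_q^* to be onto: a proper subgroup
  of the cyclic group F_q^* is annihilated by some nontrivial character. A subgroup of Aff(F_q)
  containing every slope either contains a nontrivial translation, and then it is the whole group,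
  or it meets the translations trivially; then fst is injective on it, so it has at most q - 1
  elements, is abelian, and contains the stabiliser of a point x0.

  In the first case any element of A^n lies in both cosets. In the second case the size hypothesis
  yields |A|^n > q^2 (q - 1)^n, and it suffices to show that A^n maps every u to every v (take
  u = x0, v = z x0 for z Gamma, and u = z^-1 x0, v = x0 for Gamma z). This is a spectral gap
  argument for the operator T f (x) = sum_{a in A} f (a x): two distinct affine maps agree in at
  most one point, which bounds the Hilbert-Schmidt norm of T on mean-zero functions and gives
  |T h|^2 <= |A| (q - 1) |h|^2 there. Hence the number T^n 1_v (u) of words in A^n sending u to v
  differs from |A|^n / q by at most (|A| (q - 1))^(n/2), and so it is positive.
*)

theory Submission
  imports Defs "HOL-Algebra.Multiplicative_Group" "HOL-Algebra.Algebraic_Closure_Type"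
    "HOL-Analysis.Convex"
begin

section \<open>The affine group\<close>

lemma carrier_Aff: "carrier Aff = {x. fst x \<noteq> 0}"
  and mult_Aff: "x \<otimes>\<^bsub>Aff\<^esub> y = aff_mult x y"
  and one_Aff: "\<one>\<^bsub>Aff\<^esub> = (1, 0)"
  by (simp_all add: Aff_def)

lemma group_Aff: "group (Aff :: ('a::field \<times> 'a) monoid)"
proof (rule groupI)
  fix x :: "'a \<times> 'a"
  assume "x \<in> carrier Aff"
  then show "\<exists>y\<in>carrier Aff. y \<otimes>\<^bsub>Aff\<^esub> x = \<one>\<^bsub>Aff\<^esub>"
    by (intro bexI[of _ "(1 / fst x, - snd x / fst x)"])
       (auto simp: Aff_def aff_mult_def field_simps)
qed (auto simp: Aff_def aff_mult_def algebra_simps)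

lemma inv_Aff: "x \<in> carrier Aff \<Longrightarrow> inv\<^bsub>Aff\<^esub> x = (1 / fst x, - snd x / fst x)"
  by (rule group.inv_equality[OF group_Aff]) (auto simp: Aff_def aff_mult_def field_simps)

definition aff_app :: "'a::field \<times> 'a \<Rightarrow> 'a \<Rightarrow> 'a" where
  "aff_app g x = fst g * x + snd g"

lemma aff_app_mult: "aff_app (aff_mult g h) x = aff_app g (aff_app h x)"
  by (simp add: aff_app_def aff_mult_def algebra_simps)

lemma aff_app_inv_cancel:
  assumes "z \<in> carrier Aff"
  shows "aff_app (inv\<^bsub>Aff\<^esub> z) (aff_app z x) = x"
proof -
  have "aff_app (inv\<^bsub>Aff\<^esub> z \<otimes>\<^bsub>Aff\<^esub> z) x = x"
    using assms by (simp add: group.l_inv[OF group_Aff] one_Aff aff_app_def)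
  then show ?thesis
    by (simp add: mult_Aff aff_app_mult)
qed

lemma aff_setpow_subset_carrier:
  assumes "A \<subseteq> carrier Aff"
  shows "aff_setpow A k \<subseteq> carrier Aff"
proof (induction k)
  case 0
  then show ?case
    by (simp add: carrier_Aff)
next
  case (Suc k)
  show ?case
  proof
    fix y
    assume "y \<in> aff_setpow A (Suc k)"
    then obtain x a where "y = x \<otimes>\<^bsub>Aff\<^esub> a" "x \<in> aff_setpow A k" "a \<in> A"
      by (auto simp: mult_Aff)
    moreover have "x \<in> carrier Aff" "a \<in> carrier Aff"
      using Suc assms calculation(2,3) by auto
    ultimately show "y \<in> carrier Aff"
      by (simp add: monoid.m_closed[OF group.is_monoid[OF group_Aff]])
  qed
qed

lemma aff_setpow_nonempty:
  assumes "A \<noteq> {}"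
  shows "aff_setpow A k \<noteq> {}"
proof (induction k)
  case (Suc k)
  then obtain x a where "x \<in> aff_setpow A k" "a \<in> A"
    using assms by blast
  then have "aff_mult x a \<in> aff_setpow A (Suc k)"
    by (simp only: aff_setpow.simps) blast
  then show ?case
    by blast
qed simp

section \<open>Characters of the multiplicative group\<close>

lemma card_UNIV_field_gt_1: "1 < card (UNIV :: 'a::{finite,field} set)"
proof -
  have "card {0::'a, 1} \<le> card (UNIV :: 'a set)"
    by (rule card_mono) auto
  then show ?thesis
    by simp
qed

lemma nonzero_pow_card_minus_one:
  fixes x :: "'a::{finite,field}"
  assumes "x \<noteq> 0"
  shows "x ^ (card (UNIV :: 'a set) - 1) = 1"
proof -
  let ?U = "UNIV - {0::'a}"
  have "inj_on ((*) x) ?U"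
    using assms by (auto intro: inj_onI)
  moreover have "(*) x ` ?U \<subseteq> ?U"
    using assms by auto
  ultimately have "bij_betw ((*) x) ?U ?U"
    by (simp add: bij_betw_def endo_inj_surj)
  then have "(\<Prod>y\<in>?U. x * y) = (\<Prod>y\<in>?U. y)"
    by (rule prod.reindex_bij_betw)
  then have "x ^ card ?U * (\<Prod>y\<in>?U. y) = 1 * (\<Prod>y\<in>?U. y)"
    by (simp add: prod.distrib)
  moreover have "(\<Prod>y\<in>?U. y) \<noteq> 0"
    by simp
  ultimately show ?thesis
    by (simp add: card_Diff_singleton)
qed

lemma finite_field_generator:
  obtains g :: "'a::{finite,field}" where "g \<noteq> 0" "\<And>x. x \<noteq> 0 \<Longrightarrow> \<exists>i. x = g ^ i"
proof -
  let ?R = "ring_of_type_algebra :: 'a ring"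
  interpret field ?R
    by (rule field_from_type_algebra)
  obtain g where g: "g \<in> carrier (mult_of ?R)"
    and gen: "carrier (mult_of ?R) = {g [^]\<^bsub>?R\<^esub> i | i::nat. i \<in> UNIV}"
    using finite_field_mult_group_has_gen by (auto simp: ring_of_type_algebra_def)
  have "g [^]\<^bsub>?R\<^esub> i = g ^ i" for i :: nat
    by (induction i) (simp_all add: ring_of_type_algebra_def)
  with g gen show thesis
    by (intro that) (auto simp: ring_of_type_algebra_def)
qed

lemma pow_in_subgroup_iff_dvd:
  fixes g :: "'a::{finite,field}" and H :: "'a set"
  assumes "g \<noteq> 0" and one: "1 \<in> H" and mult: "\<And>x y. x \<in> H \<Longrightarrow> y \<in> H \<Longrightarrow> x * y \<in> H"
    and inverse: "\<And>x. x \<in> H \<Longrightarrow> inverse x \<in> H"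
  obtains d where "0 < d" "\<And>i. g ^ i \<in> H \<longleftrightarrow> d dvd i"
proof -
  have pow: "x ^ m \<in> H" if "x \<in> H" for x m
    using that by (induction m) (simp_all add: one mult)
  define d where "d = (LEAST k. 0 < k \<and> g ^ k \<in> H)"
  have "0 < card (UNIV :: 'a set) - 1 \<and> g ^ (card (UNIV :: 'a set) - 1) \<in> H"
    using card_UNIV_field_gt_1[where 'a='a] nonzero_pow_card_minus_one[OF \<open>g \<noteq> 0\<close>] one by simp
  then have d: "0 < d \<and> g ^ d \<in> H"
    unfolding d_def by (rule LeastI)
  have below_d: "\<not> (0 < k \<and> g ^ k \<in> H)" if "k < d" for k
    using that unfolding d_def by (rule not_less_Least)
  have "g ^ i \<in> H \<longleftrightarrow> d dvd i" for i
  proof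
    assume "d dvd i"
    then show "g ^ i \<in> H"
      using pow d by (auto simp: power_mult)
  next
    assume "g ^ i \<in> H"
    have "g ^ i = (g ^ d) ^ (i div d) * g ^ (i mod d)"
      by (metis div_mult_mod_eq power_add power_mult mult.commute)
    then have "g ^ (i mod d) = g ^ i * inverse ((g ^ d) ^ (i div d))"
      using \<open>g \<noteq> 0\<close> by (simp add: field_simps)
    then have "g ^ (i mod d) \<in> H"
      using \<open>g ^ i \<in> H\<close> d by (simp add: mult inverse pow)
    then show "d dvd i"
      using below_d[of "i mod d"] d by (auto simp: mod_less_divisor)
  qed
  with d that show thesis
    by blast
qed

lemma cis_2pi_div_eq_1_iff:
  assumes "0 < d"
  shows "cis (2 * pi / real d) = 1 \<longleftrightarrow> d = 1"
proof
  assume "cis (2 * pi / real d) = 1"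
  then have "cos (2 * pi / real d) = 1"
    by (metis cis.sel(1) one_complex.sel(1))
  then obtain m :: int where "2 * pi / real d = of_int m * 2 * pi"
    by (auto simp: cos_one_2pi_int)
  then have "(2 * pi) * (1 / real d) = (2 * pi) * of_int m"
    by (simp add: mult_ac)
  then have "1 / real d = of_int m"
    by (subst (asm) mult_left_cancel) auto
  moreover have "0 < 1 / real d" "1 / real d \<le> 1"
    using assms by auto
  ultimately have "m = 1"
    by simp
  then show "d = 1"
    using \<open>1 / real d = of_int m\<close> by simp
qed simp

lemma mult_char_of_generator:
  fixes g :: "'a::{finite,field}"
  assumes gen: "\<And>x. x \<noteq> 0 \<Longrightarrow> \<exists>i. x = g ^ i" and "g \<noteq> 0" "0 < d"
    and order: "\<And>i. g ^ i = 1 \<Longrightarrow> d dvd i"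
  obtains \<chi> :: "'a \<Rightarrow> complex" where "mult_char \<chi>" "\<And>i. \<chi> (g ^ i) = cis (2 * pi * i / d)"
proof -
  define e where "e i = cis (2 * pi * real i / real d)" for i :: nat
  have e_mod: "e i = e (i mod d)" for i
  proof -
    have "real i = real (i div d) * real d + real (i mod d)"
      by (metis div_mult_mod_eq of_nat_add of_nat_mult)
    then have "2 * pi * real i / real d = 2 * pi * real (i mod d) / real d + 2 * pi * real (i div d)"
      using \<open>0 < d\<close> by (simp add: field_simps)
    then show ?thesis
      by (simp add: e_def cis_mult[symmetric])
  qed
  have e_cong: "e i = e j" if "g ^ i = g ^ j" for i j
  proof -
    have "i mod d = j mod d" if "g ^ i = g ^ j" "j \<le> i" for i j
    proof -
      have "g ^ j * g ^ (i - j) = g ^ j * 1"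
        using that by (simp add: power_add[symmetric])
      then have "d dvd i - j"
        using \<open>g \<noteq> 0\<close> order by simp
      then show ?thesis
        using \<open>j \<le> i\<close> by (simp add: mod_eq_dvd_iff_nat)
    qed
    then show ?thesis
      using \<open>g ^ i = g ^ j\<close> e_mod by (metis nat_le_linear)
  qed
  define \<chi> where "\<chi> x = e (SOME i. x = g ^ i)" for x
  have \<chi>_pow: "\<chi> (g ^ i) = e i" for i
    unfolding \<chi>_def by (rule e_cong) (metis (mono_tags) someI)
  have "mult_char \<chi>"
    unfolding mult_char_def
  proof (intro conjI allI impI)
    fix x y :: 'a
    assume "x \<noteq> 0" "y \<noteq> 0"
    then obtain i j where "x = g ^ i" "y = g ^ j"
      using gen by blast
    then show "\<chi> (x * y) = \<chi> x * \<chi> y"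
      by (simp add: \<chi>_pow e_def power_add[symmetric] cis_mult[symmetric] add_divide_distrib
          distrib_left)
  qed (simp add: \<chi>_def e_def)
  with \<chi>_pow show thesis
    by (intro that) (simp_all add: e_def)
qed

lemma mult_char_trivial_on_proper_subgroup:
  fixes H :: "'a::{finite,field} set"
  assumes one: "1 \<in> H" and mult: "\<And>x y. x \<in> H \<Longrightarrow> y \<in> H \<Longrightarrow> x * y \<in> H"
    and inverse: "\<And>x. x \<in> H \<Longrightarrow> inverse x \<in> H"
    and "c \<noteq> 0" "c \<notin> H"
  obtains \<chi> :: "'a \<Rightarrow> complex"
  where "mult_char \<chi>" "nontrivial_char \<chi>" "\<And>h. h \<in> H \<Longrightarrow> h \<noteq> 0 \<Longrightarrow> \<chi> h = 1"
proof -
  obtain g :: 'a where "g \<noteq> 0" and gen: "\<And>x. x \<noteq> 0 \<Longrightarrow> \<exists>i. x = g ^ i"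
    by (rule finite_field_generator) blast
  obtain d where "0 < d" and pow_in_H: "\<And>i. g ^ i \<in> H \<longleftrightarrow> d dvd i"
    using pow_in_subgroup_iff_dvd[OF \<open>g \<noteq> 0\<close> one mult inverse] by blast
  then obtain \<chi> :: "'a \<Rightarrow> complex"
    where "mult_char \<chi>" and \<chi>_pow: "\<And>i. \<chi> (g ^ i) = cis (2 * pi * i / d)"
    using mult_char_of_generator[OF gen \<open>g \<noteq> 0\<close> \<open>0 < d\<close>] one by metis
  have "d \<noteq> 1"
    using gen[OF \<open>c \<noteq> 0\<close>] pow_in_H \<open>c \<notin> H\<close> by auto
  then have "nontrivial_char \<chi>"
    using \<chi>_pow[of 1] \<open>g \<noteq> 0\<close> cis_2pi_div_eq_1_iff[OF \<open>0 < d\<close>]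
    unfolding nontrivial_char_def by auto
  moreover have "\<chi> h = 1" if "h \<in> H" "h \<noteq> 0" for h
  proof -
    obtain i where "h = g ^ i"
      using gen \<open>h \<noteq> 0\<close> by blast
    moreover obtain m where "i = d * m"
      using pow_in_H[of i] \<open>h \<in> H\<close> \<open>h = g ^ i\<close> by (auto elim: dvdE)
    ultimately have "\<chi> h = cis (2 * pi * real m)"
      using \<chi>_pow[of i] \<open>0 < d\<close> by (simp add: mult.assoc)
    then show ?thesis
      by simp
  qed
  ultimately show thesis
    using that \<open>mult_char \<chi>\<close> by blast
qed

lemma subgroup_Aff_has_slope:
  fixes \<Gamma> :: "('a::{finite,field} \<times> 'a) set"
  assumes sub: "subgroup \<Gamma> Aff"
    and chars: "\<forall>\<chi>::'a \<Rightarrow> complex. mult_char \<chi> \<and> nontrivial_char \<chi> \<longrightarrow> (\<exists>\<gamma>\<in>\<Gamma>. \<chi> (fst \<gamma>) \<noteq> 1)"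
    and "c \<noteq> 0"
  shows "\<exists>e. (c, e) \<in> \<Gamma>"
proof (rule ccontr)
  assume "\<nexists>e. (c, e) \<in> \<Gamma>"
  then have "c \<notin> fst ` \<Gamma>"
    by force
  moreover have "1 \<in> fst ` \<Gamma>"
    using subgroup.one_closed[OF sub] by (force simp: one_Aff)
  moreover have "x * y \<in> fst ` \<Gamma>" if "x \<in> fst ` \<Gamma>" "y \<in> fst ` \<Gamma>" for x y
    using that subgroup.m_closed[OF sub] by (force simp: mult_Aff aff_mult_def)
  moreover have "inverse x \<in> fst ` \<Gamma>" if "x \<in> fst ` \<Gamma>" for x
    using that subgroup.m_inv_closed[OF sub] subgroup.subset[OF sub]
    by (force simp: inv_Aff field_simps)
  ultimately obtain \<chi> :: "'a \<Rightarrow> complex" where "mult_char \<chi>" "nontrivial_char \<chi>"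
    and trivial: "\<And>h. h \<in> fst ` \<Gamma> \<Longrightarrow> h \<noteq> 0 \<Longrightarrow> \<chi> h = 1"
    using mult_char_trivial_on_proper_subgroup \<open>c \<noteq> 0\<close> by metis
  then obtain \<gamma> where "\<gamma> \<in> \<Gamma>" "\<chi> (fst \<gamma>) \<noteq> 1"
    using chars by blast
  moreover have "fst \<gamma> \<noteq> 0"
    using \<open>\<gamma> \<in> \<Gamma>\<close> subgroup.subset[OF sub] by (auto simp: carrier_Aff)
  ultimately show False
    using trivial by blast
qed

section \<open>Subgroups of the affine group containing every slope\<close>

lemma subgroup_Aff_with_translation:
  fixes \<Gamma> :: "('a::field \<times> 'a) set"
  assumes sub: "subgroup \<Gamma> Aff"
    and slopes: "\<And>c. c \<noteq> 0 \<Longrightarrow> \<exists>e. (c, e) \<in> \<Gamma>"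
    and "(1, t) \<in> \<Gamma>" "t \<noteq> 0"
  shows "\<Gamma> = carrier Aff"
proof
  have mult: "aff_mult x y \<in> \<Gamma>" if "x \<in> \<Gamma>" "y \<in> \<Gamma>" for x y
    using subgroup.m_closed[OF sub that] by (simp add: mult_Aff)
  have translation: "(1, s) \<in> \<Gamma>" for s
  proof (cases "s = 0")
    case True
    then show ?thesis
      using subgroup.one_closed[OF sub] by (simp add: one_Aff)
  next
    case False
    then obtain b where b: "(s / t, b) \<in> \<Gamma>"
      using slopes \<open>t \<noteq> 0\<close> by fastforce
    then have "inv\<^bsub>Aff\<^esub> (s / t, b) \<in> \<Gamma>"
      by (rule subgroup.m_inv_closed[OF sub])
    moreover have "inv\<^bsub>Aff\<^esub> (s / t, b) = (t / s, - b * t / s)"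
      using False \<open>t \<noteq> 0\<close> by (simp add: inv_Aff carrier_Aff)
    ultimately have "aff_mult (aff_mult (s / t, b) (1, t)) (t / s, - b * t / s) \<in> \<Gamma>"
      using mult b \<open>(1, t) \<in> \<Gamma>\<close> by simp
    moreover have "aff_mult (aff_mult (s / t, b) (1, t)) (t / s, - b * t / s) = (1, s)"
      using False \<open>t \<noteq> 0\<close> by (simp add: aff_mult_def field_simps)
    ultimately show ?thesis
      by simp
  qed
  show "carrier Aff \<subseteq> \<Gamma>"
  proof
    fix g :: "'a \<times> 'a"
    assume "g \<in> carrier Aff"
    then obtain b where "(fst g, b) \<in> \<Gamma>"
      using slopes by (auto simp: carrier_Aff)
    moreover have "aff_mult (1, snd g - b) (fst g, b) = g"
      by (simp add: aff_mult_def)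
    ultimately show "g \<in> \<Gamma>"
      using mult translation by metis
  qed
qed (rule subgroup.subset[OF sub])

lemma subgroup_Aff_without_translation_inj_fst:
  fixes \<Gamma> :: "('a::field \<times> 'a) set"
  assumes sub: "subgroup \<Gamma> Aff" and no_translation: "\<And>t. (1, t) \<in> \<Gamma> \<Longrightarrow> t = 0"
  shows "inj_on fst \<Gamma>"
proof (rule inj_onI)
  fix x y
  assume "x \<in> \<Gamma>" "y \<in> \<Gamma>" "fst x = fst y"
  then have "x \<otimes>\<^bsub>Aff\<^esub> inv\<^bsub>Aff\<^esub> y \<in> \<Gamma>"
    by (simp add: sub subgroup.m_closed subgroup.m_inv_closed)
  moreover have "fst y \<noteq> 0"
    using \<open>y \<in> \<Gamma>\<close> subgroup.subset[OF sub] by (auto simp: carrier_Aff)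
  ultimately have "(1, snd x - snd y) \<in> \<Gamma>"
    using \<open>y \<in> \<Gamma>\<close> subgroup.subset[OF sub] \<open>fst x = fst y\<close>
    by (auto simp: inv_Aff mult_Aff aff_mult_def field_simps)
  then have "snd x - snd y = 0"
    by (rule no_translation)
  then show "x = y"
    using \<open>fst x = fst y\<close> by (simp add: prod_eq_iff)
qed

lemma card_subgroup_Aff_without_translation:
  fixes \<Gamma> :: "('a::{finite,field} \<times> 'a) set"
  assumes sub: "subgroup \<Gamma> Aff" and no_translation: "\<And>t. (1, t) \<in> \<Gamma> \<Longrightarrow> t = 0"
  shows "card \<Gamma> \<le> card (UNIV :: 'a set) - 1"
proof -
  have "card \<Gamma> \<le> card (UNIV - {0 :: 'a})"
  proof (rule card_inj_on_le)
    show "inj_on fst \<Gamma>"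
      using sub no_translation by (rule subgroup_Aff_without_translation_inj_fst)
    show "fst ` \<Gamma> \<subseteq> UNIV - {0}"
      using subgroup.subset[OF sub] by (auto simp: carrier_Aff)
  qed simp
  then show ?thesis
    by (simp add: card_Diff_singleton)
qed

lemma subgroup_Aff_without_translation_stabilizer:
  fixes \<Gamma> :: "('a::field \<times> 'a) set"
  assumes sub: "subgroup \<Gamma> Aff"
    and slopes: "\<And>c. c \<noteq> 0 \<Longrightarrow> \<exists>e. (c, e) \<in> \<Gamma>"
    and no_translation: "\<And>t. (1, t) \<in> \<Gamma> \<Longrightarrow> t = 0"
  obtains x\<^sub>0 where "\<And>g. g \<in> carrier Aff \<Longrightarrow> aff_app g x\<^sub>0 = x\<^sub>0 \<Longrightarrow> g \<in> \<Gamma>"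
proof (cases "\<exists>a::'a. a \<noteq> 0 \<and> a \<noteq> 1")
  case True
  then obtain a b where "a \<noteq> 0" "a \<noteq> 1" "(a, b) \<in> \<Gamma>"
    using slopes by blast
  have inj: "inj_on fst \<Gamma>"
    using sub no_translation by (rule subgroup_Aff_without_translation_inj_fst)
  define x\<^sub>0 where "x\<^sub>0 = b / (1 - a)"
  show thesis
  proof (rule that[of x\<^sub>0])
    fix g :: "'a \<times> 'a"
    assume "g \<in> carrier Aff" "aff_app g x\<^sub>0 = x\<^sub>0"
    then obtain e where e: "(fst g, e) \<in> \<Gamma>"
      using slopes by (auto simp: carrier_Aff)
    \<comment> \<open>\<open>\<Gamma>\<close> embeds into the abelian group of slopes, so \<open>(a, b)\<close> and \<open>(fst g, e)\<close> commute.\<close>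
    have "aff_mult (a, b) (fst g, e) \<in> \<Gamma>" "aff_mult (fst g, e) (a, b) \<in> \<Gamma>"
      using subgroup.m_closed[OF sub] e \<open>(a, b) \<in> \<Gamma>\<close> by (simp_all add: mult_Aff)
    then have "aff_mult (a, b) (fst g, e) = aff_mult (fst g, e) (a, b)"
      by (intro inj_onD[OF inj]) (simp_all add: aff_mult_def)
    then have "e = x\<^sub>0 * (1 - fst g)"
      using \<open>a \<noteq> 1\<close> by (simp add: x\<^sub>0_def aff_mult_def field_simps)
    moreover have "snd g = x\<^sub>0 * (1 - fst g)"
      using \<open>aff_app g x\<^sub>0 = x\<^sub>0\<close> by (simp add: aff_app_def algebra_simps)
    ultimately show "g \<in> \<Gamma>"
      using e by (metis prod.collapse)
  qed
next
  case False
  show thesis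
  proof (rule that[of 0])
    fix g :: "'a \<times> 'a"
    assume "g \<in> carrier Aff" "aff_app g 0 = 0"
    then have "g = (1, 0)"
      using False by (auto simp: carrier_Aff aff_app_def prod_eq_iff)
    then show "g \<in> \<Gamma>"
      using subgroup.one_closed[OF sub] by (simp add: one_Aff)
  qed
qed

section \<open>The averaging operator and its spectral gap\<close>

definition aff_conv :: "('a::field \<times> 'a) set \<Rightarrow> ('a \<Rightarrow> real) \<Rightarrow> 'a \<Rightarrow> real" where
  "aff_conv A f x = (\<Sum>a\<in>A. f (aff_app a x))"

definition aff_count :: "('a::field \<times> 'a) set \<Rightarrow> 'a \<Rightarrow> 'a \<Rightarrow> real" where
  "aff_count A x y = (\<Sum>a\<in>A. of_bool (aff_app a x = y))"

lemma sum_aff_app_reindex: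
  fixes f :: "'a::{finite,field} \<Rightarrow> 'b::comm_monoid_add"
  assumes "fst a \<noteq> 0"
  shows "(\<Sum>x\<in>UNIV. f (aff_app a x)) = (\<Sum>x\<in>UNIV. f x)"
proof -
  have "inj (aff_app a)"
    by (rule injI) (use assms in \<open>simp add: aff_app_def\<close>)
  then have "bij (aff_app a)"
    by (simp add: bij_def finite_UNIV_inj_surj)
  then show ?thesis
    by (rule sum.reindex_bij_betw)
qed

lemma sum_aff_conv:
  fixes A :: "('a::{finite,field} \<times> 'a) set"
  assumes "A \<subseteq> carrier Aff"
  shows "(\<Sum>x\<in>UNIV. aff_conv A f x) = real (card A) * (\<Sum>x\<in>UNIV. f x)"
proof -
  have "(\<Sum>x\<in>UNIV. aff_conv A f x) = (\<Sum>a\<in>A. \<Sum>x\<in>UNIV. f (aff_app a x))"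
    unfolding aff_conv_def by (rule sum.swap)
  also have "\<dots> = (\<Sum>a\<in>A. \<Sum>x\<in>UNIV. f x)"
    using assms by (intro sum.cong refl sum_aff_app_reindex) (auto simp: carrier_Aff)
  finally show ?thesis
    by simp
qed

lemma aff_conv_diff_const:
  "finite A \<Longrightarrow> aff_conv A (\<lambda>x. f x - c) x = aff_conv A f x - real (card A) * c"
  by (simp add: aff_conv_def sum_subtractf)

lemma aff_conv_eq_sum_aff_count:
  fixes A :: "('a::{finite,field} \<times> 'a) set"
  shows "aff_conv A f x = (\<Sum>y\<in>UNIV. aff_count A x y * f y)"
proof -
  have "(\<Sum>y\<in>UNIV. aff_count A x y * f y) = (\<Sum>y\<in>UNIV. \<Sum>a\<in>A. of_bool (aff_app a x = y) * f y)"
    by (simp only: aff_count_def sum_distrib_right)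
  also have "\<dots> = (\<Sum>a\<in>A. \<Sum>y\<in>UNIV. of_bool (aff_app a x = y) * f y)"
    by (rule sum.swap)
  finally show ?thesis
    by (simp add: aff_conv_def)
qed

lemma card_aff_app_agree_le_1:
  fixes a b :: "'a::field \<times> 'a"
  assumes "a \<noteq> b"
  shows "card {x. aff_app a x = aff_app b x} \<le> 1"
proof -
  have "{x. aff_app a x = aff_app b x} \<subseteq> {(snd b - snd a) / (fst a - fst b)}"
  proof
    fix x
    assume "x \<in> {x. aff_app a x = aff_app b x}"
    then have eq: "fst a * x + snd a = fst b * x + snd b"
      by (simp add: aff_app_def)
    then have "fst a \<noteq> fst b"
      using assms by (auto simp: prod_eq_iff)
    with eq show "x \<in> {(snd b - snd a) / (fst a - fst b)}"
      by (simp add: field_simps)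
  qed
  then have "card {x. aff_app a x = aff_app b x} \<le> card {(snd b - snd a) / (fst a - fst b)}"
    by (rule card_mono[rotated]) simp
  then show ?thesis
    by simp
qed

lemma sum_aff_count_squares:
  fixes A :: "('a::{finite,field} \<times> 'a) set"
  shows "(\<Sum>x\<in>UNIV. \<Sum>y\<in>UNIV. (aff_count A x y)\<^sup>2)
           = (\<Sum>a\<in>A. \<Sum>b\<in>A. real (card {x. aff_app a x = aff_app b x}))"
proof -
  have row: "(\<Sum>y\<in>UNIV. (aff_count A x y)\<^sup>2)
          = (\<Sum>a\<in>A. \<Sum>b\<in>A. of_bool (aff_app a x = aff_app b x))" for x
  proof -
    have "(\<Sum>y\<in>UNIV. (aff_count A x y)\<^sup>2)
          = (\<Sum>y\<in>UNIV. \<Sum>a\<in>A. \<Sum>b\<in>A. of_bool (aff_app a x = y \<and> aff_app b x = y))"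
      by (simp only: aff_count_def power2_eq_square sum_product of_bool_conj)
    also have "\<dots> = (\<Sum>a\<in>A. \<Sum>b\<in>A. \<Sum>y\<in>UNIV. of_bool (aff_app a x = y \<and> aff_app b x = y))"
      by (simp only: sum.swap[of _ UNIV])
    also have "\<dots> = (\<Sum>a\<in>A. \<Sum>b\<in>A. of_bool (aff_app a x = aff_app b x))"
      by (intro sum.cong refl) simp
    finally show ?thesis .
  qed
  have "(\<Sum>x\<in>UNIV. \<Sum>y\<in>UNIV. (aff_count A x y)\<^sup>2)
          = (\<Sum>x\<in>UNIV. \<Sum>a\<in>A. \<Sum>b\<in>A. of_bool (aff_app a x = aff_app b x))"
    by (simp only: row)
  also have "\<dots> = (\<Sum>a\<in>A. \<Sum>b\<in>A. \<Sum>x\<in>UNIV. of_bool (aff_app a x = aff_app b x))"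
    by (simp only: sum.swap[of _ UNIV])
  also have "\<dots> = (\<Sum>a\<in>A. \<Sum>b\<in>A. real (card {x. aff_app a x = aff_app b x}))"
    by (intro sum.cong refl) simp
  finally show ?thesis .
qed

lemma sum_card_aff_app_agree_le:
  fixes A :: "('a::{finite,field} \<times> 'a) set"
  shows "(\<Sum>a\<in>A. \<Sum>b\<in>A. real (card {x. aff_app a x = aff_app b x}))
           \<le> real (card A) * (real (card A) + real (card (UNIV :: 'a set)) - 1)"
proof -
  have "(\<Sum>b\<in>A. real (card {x. aff_app a x = aff_app b x}))
          \<le> real (card A) + real (card (UNIV :: 'a set)) - 1" if "a \<in> A" for a
  proof -
    have "(\<Sum>b\<in>A. real (card {x. aff_app a x = aff_app b x}))
            = real (card (UNIV :: 'a set)) + (\<Sum>b\<in>A - {a}. real (card {x. aff_app a x = aff_app b x}))"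
      using sum.remove[OF finite that, of "\<lambda>b. real (card {x. aff_app a x = aff_app b x})"]
      by simp
    also have "(\<Sum>b\<in>A - {a}. real (card {x. aff_app a x = aff_app b x})) \<le> (\<Sum>b\<in>A - {a}. 1)"
    proof (rule sum_mono)
      fix b
      assume "b \<in> A - {a}"
      then have "card {x. aff_app a x = aff_app b x} \<le> 1"
        by (intro card_aff_app_agree_le_1) auto
      then show "real (card {x. aff_app a x = aff_app b x}) \<le> 1"
        by simp
    qed
    also have "(\<Sum>b\<in>A - {a}. 1) = real (card A) - 1"
    proof -
      have "1 \<le> card A"
        using that card_mono[of A "{a}"] by simp
      then show ?thesis
        using that by (simp add: card_Diff_singleton of_nat_diff)
    qed
    finally show ?thesis
      by simp
  qed
  then have "(\<Sum>a\<in>A. \<Sum>b\<in>A. real (card {x. aff_app a x = aff_app b x}))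
               \<le> (\<Sum>a\<in>A. real (card A) + real (card (UNIV :: 'a set)) - 1)"
    by (rule sum_mono)
  then show ?thesis
    by simp
qed

lemma sum_aff_count_centered_squares_le:
  fixes A :: "('a::{finite,field} \<times> 'a) set"
  defines "c \<equiv> real (card A) / real (card (UNIV :: 'a set))"
  shows "(\<Sum>x\<in>UNIV. \<Sum>y\<in>UNIV. (aff_count A x y - c)\<^sup>2)
           \<le> real (card A) * (real (card (UNIV :: 'a set)) - 1)"
proof -
  let ?q = "real (card (UNIV :: 'a set))" and ?N = "real (card A)"
  have row: "(\<Sum>y\<in>UNIV. aff_count A x y) = ?N" for x
    using aff_conv_eq_sum_aff_count[of A "\<lambda>_. 1" x] by (simp add: aff_conv_def)
  have "c * ?q = ?N"
    using card_UNIV_field_gt_1[where 'a='a] by (simp add: c_def)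
  have "(\<Sum>y\<in>UNIV. (aff_count A x y - c)\<^sup>2)
          = (\<Sum>y\<in>UNIV. (aff_count A x y)\<^sup>2 - (2 * c) * aff_count A x y + c\<^sup>2)" for x
    by (intro sum.cong refl) (simp add: power2_diff algebra_simps)
  also have "\<dots>x = (\<Sum>y\<in>UNIV. (aff_count A x y)\<^sup>2) - 2 * (c * ?N) + ?q * c\<^sup>2" for x
    by (simp add: sum.distrib sum_subtractf sum_distrib_left[symmetric] row)
  finally have "(\<Sum>x\<in>UNIV. \<Sum>y\<in>UNIV. (aff_count A x y - c)\<^sup>2)
          = (\<Sum>x\<in>UNIV. \<Sum>y\<in>UNIV. (aff_count A x y)\<^sup>2) - 2 * (c * ?q) * ?N + (c * ?q)\<^sup>2"
    by (simp add: sum.distrib sum_subtractf power2_eq_square algebra_simps)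
  also have "\<dots> = (\<Sum>a\<in>A. \<Sum>b\<in>A. real (card {x. aff_app a x = aff_app b x})) - ?N\<^sup>2"
    by (simp add: \<open>c * ?q = ?N\<close> sum_aff_count_squares power2_eq_square[of ?N])
  also have "\<dots> \<le> ?N * (?q - 1)"
    using sum_card_aff_app_agree_le[of A] by (simp add: power2_eq_square algebra_simps)
  finally show ?thesis .
qed

text \<open>Cauchy-Schwarz bounds \<open>aff_conv A\<close> on mean-zero functions by the Hilbert-Schmidt norm of
  its centred kernel \<open>aff_count A x y - |A|/q\<close>.\<close>

lemma sum_aff_conv_squares_le:
  fixes A :: "('a::{finite,field} \<times> 'a) set" and h :: "'a \<Rightarrow> real"
  assumes "(\<Sum>x\<in>UNIV. h x) = 0"
  shows "(\<Sum>x\<in>UNIV. (aff_conv A h x)\<^sup>2)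
           \<le> real (card A) * (real (card (UNIV :: 'a set)) - 1) * (\<Sum>x\<in>UNIV. (h x)\<^sup>2)"
proof -
  define c where "c = real (card A) / real (card (UNIV :: 'a set))"
  have "aff_conv A h x = (\<Sum>y\<in>UNIV. (aff_count A x y - c) * h y)" for x
    using assms by (simp add: aff_conv_eq_sum_aff_count left_diff_distrib sum_subtractf
        sum_distrib_left[symmetric])
  then have "(\<Sum>x\<in>UNIV. (aff_conv A h x)\<^sup>2)
               \<le> (\<Sum>x\<in>UNIV. (\<Sum>y\<in>UNIV. (aff_count A x y - c)\<^sup>2) * (\<Sum>y\<in>UNIV. (h y)\<^sup>2))"
    by (simp add: sum_mono Cauchy_Schwarz_ineq_sum)
  also have "\<dots> = (\<Sum>x\<in>UNIV. \<Sum>y\<in>UNIV. (aff_count A x y - c)\<^sup>2) * (\<Sum>y\<in>UNIV. (h y)\<^sup>2)"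
    by (rule sum_distrib_right[symmetric])
  also have "\<dots> \<le> real (card A) * (real (card (UNIV :: 'a set)) - 1) * (\<Sum>y\<in>UNIV. (h y)\<^sup>2)"
    unfolding c_def by (intro mult_right_mono sum_aff_count_centered_squares_le sum_nonneg) simp
  finally show ?thesis .
qed

lemma sum_aff_conv_funpow:
  fixes A :: "('a::{finite,field} \<times> 'a) set"
  assumes "A \<subseteq> carrier Aff"
  shows "(\<Sum>x\<in>UNIV. (aff_conv A ^^ k) f x) = real (card A) ^ k * (\<Sum>x\<in>UNIV. f x)"
  by (induction k) (simp_all add: sum_aff_conv[OF assms])

lemma reach_of_aff_conv_funpow_indicator:
  assumes "(aff_conv A ^^ k) (\<lambda>x. of_bool (x = v)) u \<noteq> 0"
  shows "\<exists>g\<in>aff_setpow A k. aff_app g u = v"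
  using assms
proof (induction k arbitrary: u)
  case 0
  then show ?case
    by (simp add: aff_app_def)
next
  case (Suc k)
  let ?F = "(aff_conv A ^^ k) (\<lambda>x. of_bool (x = v))"
  have "(\<Sum>a\<in>A. ?F (aff_app a u)) \<noteq> 0"
    using Suc.prems by (simp only: funpow.simps comp_apply aff_conv_def[of A ?F u] not_False_eq_True)
  then obtain a where "a \<in> A" "?F (aff_app a u) \<noteq> 0"
    by (meson sum.neutral)
  then obtain g where "g \<in> aff_setpow A k" "aff_app g (aff_app a u) = v"
    using Suc.IH by blast
  moreover from \<open>g \<in> aff_setpow A k\<close> \<open>a \<in> A\<close> have "aff_mult g a \<in> aff_setpow A (Suc k)"
    by (simp only: aff_setpow.simps) blast
  ultimately have "aff_mult g a \<in> aff_setpow A (Suc k)" "aff_app (aff_mult g a) u = v"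
    by (simp_all add: aff_app_mult)
  then show ?case
    by blast
qed

lemma sum_indicator_centered_squares:
  fixes v :: "'a::finite"
  shows "(\<Sum>x\<in>UNIV. (of_bool (x = v) - 1 / real (card (UNIV :: 'a set)))\<^sup>2)
           = 1 - 1 / real (card (UNIV :: 'a set))"
proof -
  let ?q = "real (card (UNIV :: 'a set))"
  have "?q > 0"
    by (simp add: finite_UNIV_card_ge_0)
  have "(of_bool (x = v) - 1 / ?q)\<^sup>2 = of_bool (x = v) * (1 - 2 / ?q) + 1 / ?q\<^sup>2" for x
    using \<open>?q > 0\<close> by (cases "x = v") (simp_all add: power2_diff power_divide)
  then have "(\<Sum>x\<in>UNIV. (of_bool (x = v) - 1 / ?q)\<^sup>2) = (1 - 2 / ?q) + ?q * (1 / ?q\<^sup>2)"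
    by (simp add: sum.distrib)
  also have "\<dots> = 1 - 1 / ?q"
    using \<open>?q > 0\<close> by (simp add: power2_eq_square field_simps)
  finally show ?thesis .
qed

lemma sum_squares_aff_conv_funpow_centered_indicator_le:
  fixes A :: "('a::{finite,field} \<times> 'a) set"
  assumes A: "A \<subseteq> carrier Aff"
  defines "q \<equiv> real (card (UNIV :: 'a set))" and "N \<equiv> real (card A)"
  shows "(\<Sum>x\<in>UNIV. ((aff_conv A ^^ k) (\<lambda>x. of_bool (x = v)) x - N ^ k / q)\<^sup>2)
           \<le> (N * (q - 1)) ^ k * (1 - 1 / q)"
proof -
  have "1 < q"
    using card_UNIV_field_gt_1[where 'a='a] by (simp add: q_def)
  define h where "h k x = (aff_conv A ^^ k) (\<lambda>x. of_bool (x = v)) x - N ^ k / q" for k x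
  have h_Suc: "h (Suc k) = aff_conv A (h k)" for k
    by (simp add: fun_eq_iff h_def[abs_def] aff_conv_diff_const N_def)
  have h_mean: "(\<Sum>x\<in>UNIV. h k x) = 0" for k
    using \<open>1 < q\<close> by (simp add: h_def sum_subtractf sum_aff_conv_funpow[OF A] q_def N_def)
  have "(\<Sum>x\<in>UNIV. (h k x)\<^sup>2) \<le> (N * (q - 1)) ^ k * (1 - 1 / q)"
  proof (induction k)
    case 0
    then show ?case
      by (simp add: h_def sum_indicator_centered_squares q_def)
  next
    case (Suc k)
    have "(\<Sum>x\<in>UNIV. (h (Suc k) x)\<^sup>2) \<le> N * (q - 1) * (\<Sum>x\<in>UNIV. (h k x)\<^sup>2)"
      unfolding h_Suc N_def q_def by (rule sum_aff_conv_squares_le[OF h_mean])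
    also have "\<dots> \<le> N * (q - 1) * ((N * (q - 1)) ^ k * (1 - 1 / q))"
      using \<open>1 < q\<close> by (intro mult_left_mono Suc.IH) (simp add: N_def)
    finally show ?case
      by (simp add: mult_ac)
  qed
  then show ?thesis
    by (simp add: h_def)
qed

lemma aff_setpow_reaches:
  fixes A :: "('a::{finite,field} \<times> 'a) set"
  assumes A: "A \<subseteq> carrier Aff"
    and large: "real (card (UNIV :: 'a set)) ^ 2 * (real (card (UNIV :: 'a set)) - 1) ^ n
                  < real (card A) ^ n"
  shows "\<exists>g\<in>aff_setpow A n. aff_app g u = v"
proof (rule ccontr)
  assume unreachable: "\<not> ?thesis"
  let ?q = "real (card (UNIV :: 'a set))" and ?N = "real (card A)"
  have "1 < ?q"
    using card_UNIV_field_gt_1[where 'a='a] by simp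
  have "(aff_conv A ^^ n) (\<lambda>x. of_bool (x = v)) u = 0"
    using reach_of_aff_conv_funpow_indicator unreachable by blast
  then have "(?N ^ n / ?q)\<^sup>2
               \<le> (\<Sum>x\<in>UNIV. ((aff_conv A ^^ n) (\<lambda>x. of_bool (x = v)) x - ?N ^ n / ?q)\<^sup>2)"
    using member_le_sum[of u UNIV "\<lambda>x. ((aff_conv A ^^ n) (\<lambda>x. of_bool (x = v)) x - ?N ^ n / ?q)\<^sup>2"]
    by simp
  also have "\<dots> \<le> (?N * (?q - 1)) ^ n * (1 - 1 / ?q)"
    by (rule sum_squares_aff_conv_funpow_centered_indicator_le[OF A])
  also have "\<dots> \<le> (?N * (?q - 1)) ^ n"
    using \<open>1 < ?q\<close> by (intro mult_left_le) simp_all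
  finally have "(?N ^ n)\<^sup>2 / ?q\<^sup>2 \<le> ?N ^ n * (?q - 1) ^ n"
    by (simp add: power_divide power_mult_distrib)
  then have "?N ^ n * ?N ^ n \<le> ?N ^ n * (?q\<^sup>2 * (?q - 1) ^ n)"
    using \<open>1 < ?q\<close> by (simp add: pos_divide_le_eq power2_eq_square mult_ac)
  moreover have "0 < ?N ^ n"
  proof -
    have "0 \<le> ?q\<^sup>2 * (?q - 1) ^ n"
      using \<open>1 < ?q\<close> by simp
    with large show ?thesis
      by linarith
  qed
  ultimately have "?N ^ n \<le> ?q\<^sup>2 * (?q - 1) ^ n"
    by (simp add: mult_le_cancel_left_pos)
  with large show False
    by simp
qed

section \<open>Product sets meeting cosets\<close>

lemma aff_setpow_meets_cosets_of_stabilizer: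
  fixes A \<Gamma> :: "('a::{finite,field} \<times> 'a) set"
  assumes A: "A \<subseteq> carrier Aff" and sub: "subgroup \<Gamma> Aff" and z: "z \<in> carrier Aff"
    and stabilizer: "\<And>g. g \<in> carrier Aff \<Longrightarrow> aff_app g x\<^sub>0 = x\<^sub>0 \<Longrightarrow> g \<in> \<Gamma>"
    and large: "real (card (UNIV :: 'a set)) ^ 2 * (real (card (UNIV :: 'a set)) - 1) ^ n
                  < real (card A) ^ n"
  shows "aff_setpow A n \<inter> l_coset Aff z \<Gamma> \<noteq> {} \<and> aff_setpow A n \<inter> r_coset Aff \<Gamma> z \<noteq> {}"
proof -
  interpret Aff: group Aff
    by (rule group_Aff)
  let ?z' = "inv\<^bsub>Aff\<^esub> z"
  obtain g where g: "g \<in> aff_setpow A n" "aff_app g x\<^sub>0 = aff_app z x\<^sub>0"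
    using aff_setpow_reaches[OF A large] by blast
  obtain g' where g': "g' \<in> aff_setpow A n" "aff_app g' (aff_app ?z' x\<^sub>0) = x\<^sub>0"
    using aff_setpow_reaches[OF A large] by blast
  have carrier: "g \<in> carrier Aff" "g' \<in> carrier Aff" "?z' \<in> carrier Aff"
    using g(1) g'(1) aff_setpow_subset_carrier[OF A] z by auto
  have "?z' \<otimes>\<^bsub>Aff\<^esub> g \<in> \<Gamma>"
  proof (rule stabilizer)
    show "?z' \<otimes>\<^bsub>Aff\<^esub> g \<in> carrier Aff"
      using carrier by simp
    show "aff_app (?z' \<otimes>\<^bsub>Aff\<^esub> g) x\<^sub>0 = x\<^sub>0"
      using g(2) aff_app_inv_cancel[OF z] by (simp add: mult_Aff aff_app_mult)
  qed
  then have "g \<in> l_coset Aff z \<Gamma>"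
    using carrier z by (intro subgroup.lcos_module_rev[OF sub group_Aff])
  moreover have "g' \<otimes>\<^bsub>Aff\<^esub> ?z' \<in> \<Gamma>"
  proof (rule stabilizer)
    show "g' \<otimes>\<^bsub>Aff\<^esub> ?z' \<in> carrier Aff"
      using carrier by simp
    show "aff_app (g' \<otimes>\<^bsub>Aff\<^esub> ?z') x\<^sub>0 = x\<^sub>0"
      using g'(2) by (simp add: mult_Aff aff_app_mult)
  qed
  then have "g' \<in> r_coset Aff \<Gamma> z"
    using carrier z by (intro subgroup.rcos_module_rev[OF sub group_Aff])
  ultimately show ?thesis
    using g(1) g'(1) by blast
qed

lemma aff_setpow_meets_cosets_of_carrier:
  fixes A :: "('a::field \<times> 'a) set"
  assumes A: "A \<subseteq> carrier Aff" "A \<noteq> {}" and z: "z \<in> carrier Aff"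
  shows "aff_setpow A n \<inter> l_coset Aff z (carrier Aff) \<noteq> {}
       \<and> aff_setpow A n \<inter> r_coset Aff (carrier Aff) z \<noteq> {}"
proof -
  interpret Aff: group Aff
    by (rule group_Aff)
  obtain g where g: "g \<in> aff_setpow A n"
    using aff_setpow_nonempty[OF A(2)] by blast
  then have "g \<in> carrier Aff"
    using aff_setpow_subset_carrier[OF A(1)] by blast
  then have "g \<in> l_coset Aff z (carrier Aff)" "g \<in> r_coset Aff (carrier Aff) z"
    using z by (auto intro: subgroup.lcos_module_rev subgroup.rcos_module_rev
        Aff.subgroup_self group_Aff)
  with g show ?thesis
    by blast
qed

lemma weaken_size_condition:
  fixes N G q :: real
  assumes "q ^ (n + 2) * (q - 1) ^ 2 < N ^ n * G ^ 2"
    and "0 \<le> N" "0 \<le> G" "G \<le> q - 1" "1 < q"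
  shows "q ^ 2 * (q - 1) ^ n < N ^ n"
proof -
  have "N ^ n * G ^ 2 \<le> N ^ n * (q - 1) ^ 2"
    using assms(2-4) by (intro mult_left_mono power_mono) simp_all
  with assms(1) have "q ^ (n + 2) * (q - 1) ^ 2 < N ^ n * (q - 1) ^ 2"
    by linarith
  then have "q ^ (n + 2) < N ^ n"
    by (rule mult_right_less_imp_less) simp
  moreover have "q ^ 2 * (q - 1) ^ n \<le> q ^ 2 * q ^ n"
    using assms(5) by (intro mult_left_mono power_mono) simp_all
  moreover have "q ^ (n + 2) = q ^ 2 * q ^ n"
    by (simp only: power_add mult.commute)
  ultimately show ?thesis
    by linarith
qed

theorem corollary7:
  fixes A \<Gamma> :: "('a::{finite,field} \<times> 'a) set"
    and z :: "'a \<times> 'a" and n :: nat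
  assumes "A \<subseteq> carrier Aff"
    and "subgroup \<Gamma> Aff"
    and "\<forall>\<chi>::'a \<Rightarrow> complex. mult_char \<chi> \<and> nontrivial_char \<chi> \<longrightarrow>
            (\<exists>\<gamma>\<in>\<Gamma>. \<chi> (fst \<gamma>) \<noteq> 1)"
    and "z \<in> carrier Aff"
    and "n \<ge> 1"
    and "real (card A) ^ n * real (card \<Gamma>) ^ 2
           > real (card (UNIV :: 'a set)) ^ (n + 2) * (real (card (UNIV :: 'a set)) - 1) ^ 2"
  shows "aff_setpow A n \<inter> l_coset Aff z \<Gamma> \<noteq> {}
       \<and> aff_setpow A n \<inter> r_coset Aff \<Gamma> z \<noteq> {}"
proof -
  note A = assms(1) and sub = assms(2) and z = assms(4) and size = assms(6)
  let ?q = "real (card (UNIV :: 'a set))"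
  have "1 < ?q"
    using card_UNIV_field_gt_1[where 'a='a] by simp
  have slopes: "\<And>c. c \<noteq> 0 \<Longrightarrow> \<exists>e. (c, e) \<in> \<Gamma>"
    using subgroup_Aff_has_slope[OF sub assms(3)] by blast
  show ?thesis
  proof (cases "\<exists>t. t \<noteq> 0 \<and> (1, t) \<in> \<Gamma>")
    case True
    then have "\<Gamma> = carrier Aff"
      using subgroup_Aff_with_translation[OF sub slopes] by blast
    moreover have "A \<noteq> {}"
      using size \<open>n \<ge> 1\<close> \<open>1 < ?q\<close> by (auto simp: zero_power mult_less_0_iff)
    ultimately show ?thesis
      using aff_setpow_meets_cosets_of_carrier[OF A _ z] by simp
  next
    case False
    then have no_translation: "\<And>t. (1, t) \<in> \<Gamma> \<Longrightarrow> t = 0"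
      by blast
    obtain x\<^sub>0 where "\<And>g. g \<in> carrier Aff \<Longrightarrow> aff_app g x\<^sub>0 = x\<^sub>0 \<Longrightarrow> g \<in> \<Gamma>"
      using subgroup_Aff_without_translation_stabilizer[OF sub slopes no_translation] by blast
    moreover have "real (card \<Gamma>) \<le> ?q - 1"
      using card_subgroup_Aff_without_translation[OF sub no_translation] \<open>1 < ?q\<close> by linarith
    ultimately show ?thesis
      using weaken_size_condition[OF size] \<open>1 < ?q\<close>
      by (intro aff_setpow_meets_cosets_of_stabilizer[OF A sub z]) auto
  qed
qed

end
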